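(* Let $\mathfrak{G}=(Y,R,E)$ be a descriptive $\mathsf{MS4}$-frame, $\rho\mathfrak{G}=(X,R',Q')$ its skeleton and $\pi:Y\to X$ the quotient map. Then (1) $\pi^{-1}[\max X]=\operatorname{qmax}Y$; (2) $\pi^{-1}[E_{Q'}[A]]=E_Q[\pi^{-1}[A]]$ for every $A\subseteq X$; (3) $\pi^{-1}[E_{Q'}[\max X]]=E_Q[\operatorname{qmax}Y]$.
   Context: A descriptive $\mathsf{MS4}$-frame is $(Y,R,E)$ with $Y$ a Stone space, $R$ a continuous quasi-order, $E$ a continuous equivalence relation (continuous: $R[x]=\{y:xRy\}$ closed for all $x$, $R^{-1}[U]$ clopen for clopen $U$), such that $xEy$, $yRz$ imply $\exists u$ with $xRu$, $uEz$. $Q=E\circ R$: $xQy$ iff $\exists z$ with $xRz$, $zEy$. Skeleton: with $xE_Ry$ iff $xRy$ and $yRx$, $X=Y/E_R$, $\pi$ the quotient map, $\pi(x)R'\pi(y)$ iff $xRy$, $\pi(x)Q'\pi(y)$ iff $xQy$. For a quasi-order $S$, $E_S$ is the equivalence $xE_Sy$ iff $xSy$ and $ySx$; $S[A]=\{y:\exists a\in A,\ aSy\}$. $\max X=\{x: xR'y\Rightarrow x=y\}$, $\operatorname{qmax}Y=\{x: xRy\Rightarrow yRx\}$. *)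

theory Defs
  imports "HOL-Analysis.Analysis"
begin

definition stone_space :: "'a topology \<Rightarrow> bool" where
  "stone_space T \<longleftrightarrow> compact_space T \<and> Hausdorff_space T \<and>
     (\<forall>U x. openin T U \<and> x \<in> U \<longrightarrow> (\<exists>V. openin T V \<and> closedin T V \<and> x \<in> V \<and> V \<subseteq> U))"

definition continuous_rel :: "'a topology \<Rightarrow> ('a \<times> 'a) set \<Rightarrow> bool" where
  "continuous_rel T R \<longleftrightarrow> R \<subseteq> topspace T \<times> topspace T \<and>
     (\<forall>x \<in> topspace T. closedin T (R `` {x})) \<and>
     (\<forall>U. openin T U \<and> closedin T U \<longrightarrow>
          openin T (R\<inverse> `` U) \<and> closedin T (R\<inverse> `` U))"

definition quasi_order_on :: "'a set \<Rightarrow> ('a \<times> 'a) set \<Rightarrow> bool" where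
  "quasi_order_on Y R \<longleftrightarrow> R \<subseteq> Y \<times> Y \<and> refl_on Y R \<and> trans R"

definition descriptive_MS4_frame ::
  "'a topology \<Rightarrow> ('a \<times> 'a) set \<Rightarrow> ('a \<times> 'a) set \<Rightarrow> bool" where
  "descriptive_MS4_frame T R E \<longleftrightarrow>
     stone_space T \<and>
     quasi_order_on (topspace T) R \<and> continuous_rel T R \<and>
     equiv (topspace T) E \<and> continuous_rel T E \<and>
     (\<forall>x y z. (x, y) \<in> E \<and> (y, z) \<in> R \<longrightarrow> (\<exists>u. (x, u) \<in> R \<and> (u, z) \<in> E))"

definition Qrel :: "('a \<times> 'a) set \<Rightarrow> ('a \<times> 'a) set \<Rightarrow> ('a \<times> 'a) set" where
  "Qrel R E = {(x, y). \<exists>z. (x, z) \<in> R \<and> (z, y) \<in> E}"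

definition Eof :: "('b \<times> 'b) set \<Rightarrow> ('b \<times> 'b) set" where
  "Eof S = {(x, y). (x, y) \<in> S \<and> (y, x) \<in> S}"

definition skel_pi :: "('a \<times> 'a) set \<Rightarrow> 'a \<Rightarrow> 'a set" where
  "skel_pi R x = Eof R `` {x}"

definition skel_X :: "'a set \<Rightarrow> ('a \<times> 'a) set \<Rightarrow> 'a set set" where
  "skel_X Y R = Y // Eof R"

definition skel_R :: "'a set \<Rightarrow> ('a \<times> 'a) set \<Rightarrow> ('a set \<times> 'a set) set" where
  "skel_R Y R = {(skel_pi R x, skel_pi R y) | x y. x \<in> Y \<and> y \<in> Y \<and> (x, y) \<in> R}"

definition skel_Q :: "'a set \<Rightarrow> ('a \<times> 'a) set \<Rightarrow> ('a \<times> 'a) set \<Rightarrow> ('a set \<times> 'a set) set" where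
  "skel_Q Y R E = {(skel_pi R x, skel_pi R y) | x y. x \<in> Y \<and> y \<in> Y \<and> (x, y) \<in> Qrel R E}"

definition max_set :: "'b set \<Rightarrow> ('b \<times> 'b) set \<Rightarrow> 'b set" where
  "max_set X S = {x \<in> X. \<forall>y. (x, y) \<in> S \<longrightarrow> x = y}"

definition qmax_set :: "'a set \<Rightarrow> ('a \<times> 'a) set \<Rightarrow> 'a set" where
  "qmax_set Y R = {x \<in> Y. \<forall>y. (x, y) \<in> R \<longrightarrow> (y, x) \<in> R}"

definition skel_preim :: "'a set \<Rightarrow> ('a \<times> 'a) set \<Rightarrow> 'a set set \<Rightarrow> 'a set" where
  "skel_preim Y R A = {x \<in> Y. skel_pi R x \<in> A}"

end

theory Submission
  imports Defs
begin

text \<open>Both relations of the skeleton are images under \<pi> of relations S on Y that absorb R on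
  either side, R O S O R \<subseteq> S: for R' by transitivity, and for Q' because Q = R O E and the
  frame condition says E O R \<subseteq> R O E. Such an S is reflected by \<pi>, so all three claims
  reduce to pointwise statements on Y.\<close>

lemma Qrel_eq_relcomp: "Qrel R E = R O E"
  unfolding Qrel_def by blast

lemma descriptive_MS4_frame_commute:
  assumes "descriptive_MS4_frame T R E"
  shows "E O R \<subseteq> R O E"
  using assms unfolding descriptive_MS4_frame_def by blast

lemma Qrel_absorbs_R:
  assumes "trans R" and "E O R \<subseteq> R O E"
  shows "R O Qrel R E O R \<subseteq> Qrel R E"
proof -
  have "R O Qrel R E O R = (R O R) O (E O R)"
    by (simp add: Qrel_eq_relcomp O_assoc)
  also have "\<dots> \<subseteq> R O (R O E)"
    by (rule relcomp_mono[OF trans_O_subset[OF assms(1)] assms(2)])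
  also have "\<dots> \<subseteq> R O E"
    using trans_O_subset[OF \<open>trans R\<close>] by (auto simp flip: O_assoc)
  finally show ?thesis
    by (simp add: Qrel_eq_relcomp)
qed

lemma Qrel_subset:
  assumes "R \<subseteq> Y \<times> Y" and "E \<subseteq> Y \<times> Y"
  shows "Qrel R E \<subseteq> Y \<times> Y"
  using assms unfolding Qrel_def by blast

lemma equiv_Eof:
  assumes "quasi_order_on Y R"
  shows "equiv Y (Eof R)"
  using assms unfolding quasi_order_on_def equiv_def Eof_def refl_on_def sym_def trans_def
  by blast

lemma skel_pi_eq_iff:
  assumes "quasi_order_on Y R" and "x \<in> Y" and "y \<in> Y"
  shows "skel_pi R x = skel_pi R y \<longleftrightarrow> (x, y) \<in> R \<and> (y, x) \<in> R"
  using eq_equiv_class_iff[OF equiv_Eof[OF assms(1)] assms(2,3)]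
  unfolding skel_pi_def Eof_def by simp

lemma skel_X_eq_image: "skel_X Y R = skel_pi R ` Y"
  unfolding skel_X_def skel_pi_def quotient_def by blast

lemma skel_image_rel_iff:
  assumes "quasi_order_on Y R" and "R O S O R \<subseteq> S" and "x \<in> Y" and "y \<in> Y"
  shows "(skel_pi R x, skel_pi R y) \<in> {(skel_pi R u, skel_pi R v) | u v. u \<in> Y \<and> v \<in> Y \<and> (u, v) \<in> S}
    \<longleftrightarrow> (x, y) \<in> S" (is "?lhs \<longleftrightarrow> ?rhs")
proof
  assume ?lhs
  then obtain u v where "u \<in> Y" "v \<in> Y" "(u, v) \<in> S"
    and "skel_pi R x = skel_pi R u" "skel_pi R y = skel_pi R v"
    by blast
  then have "(x, u) \<in> R" "(v, y) \<in> R"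
    using skel_pi_eq_iff[OF assms(1)] assms(3,4) by simp_all
  with \<open>(u, v) \<in> S\<close> have "(x, y) \<in> R O S O R"
    by blast
  then show ?rhs
    using assms(2) by blast
next
  assume ?rhs
  then show ?lhs
    using assms(3,4) by blast
qed

lemma skel_R_iff:
  assumes "quasi_order_on Y R" and "x \<in> Y" and "y \<in> Y"
  shows "(skel_pi R x, skel_pi R y) \<in> skel_R Y R \<longleftrightarrow> (x, y) \<in> R"
proof -
  have "trans R"
    using assms(1) unfolding quasi_order_on_def by simp
  then have "R O R O R \<subseteq> R"
    unfolding trans_def by blast
  then show ?thesis
    unfolding skel_R_def by (rule skel_image_rel_iff[OF assms(1) _ assms(2,3)])
qed

lemma skel_Q_iff:
  assumes "quasi_order_on Y R" and "E O R \<subseteq> R O E" and "x \<in> Y" and "y \<in> Y"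
  shows "(skel_pi R x, skel_pi R y) \<in> skel_Q Y R E \<longleftrightarrow> (x, y) \<in> Qrel R E"
proof -
  have "trans R"
    using assms(1) unfolding quasi_order_on_def by simp
  then have "R O Qrel R E O R \<subseteq> Qrel R E"
    using assms(2) by (rule Qrel_absorbs_R)
  then show ?thesis
    unfolding skel_Q_def by (rule skel_image_rel_iff[OF assms(1) _ assms(3,4)])
qed

lemma skel_R_subset: "skel_R Y R \<subseteq> skel_X Y R \<times> skel_X Y R"
  unfolding skel_R_def skel_X_eq_image by blast

lemma skel_preim_max_set:
  assumes "quasi_order_on Y R"
  shows "skel_preim Y R (max_set (skel_X Y R) (skel_R Y R)) = qmax_set Y R"
proof -
  have "skel_pi R x \<in> max_set (skel_X Y R) (skel_R Y R) \<longleftrightarrow> x \<in> qmax_set Y R"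
    if "x \<in> Y" for x
  proof -
    have "skel_pi R x \<in> max_set (skel_X Y R) (skel_R Y R)
        \<longleftrightarrow> (\<forall>y\<in>Y. (skel_pi R x, skel_pi R y) \<in> skel_R Y R \<longrightarrow> skel_pi R x = skel_pi R y)"
      using skel_R_subset[of Y R] that unfolding max_set_def skel_X_eq_image by auto
    also have "\<dots> \<longleftrightarrow> (\<forall>y\<in>Y. (x, y) \<in> R \<longrightarrow> (y, x) \<in> R)"
      by (simp add: skel_R_iff[OF assms that] skel_pi_eq_iff[OF assms that])
    also have "\<dots> \<longleftrightarrow> x \<in> qmax_set Y R"
      using assms that unfolding quasi_order_on_def qmax_set_def by blast
    finally show ?thesis .
  qed
  then show ?thesis
    unfolding skel_preim_def qmax_set_def by blast
qed

lemma skel_preim_Eof_skel_Q: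
  assumes "quasi_order_on Y R" and "E \<subseteq> Y \<times> Y" and "E O R \<subseteq> R O E"
    and "A \<subseteq> skel_X Y R"
  shows "skel_preim Y R (Eof (skel_Q Y R E) `` A) = Eof (Qrel R E) `` skel_preim Y R A"
proof -
  have "R \<subseteq> Y \<times> Y"
    using assms(1) unfolding quasi_order_on_def by simp
  then have Q_Y: "Qrel R E \<subseteq> Y \<times> Y"
    using assms(2) by (rule Qrel_subset)
  have "skel_pi R x \<in> Eof (skel_Q Y R E) `` A \<longleftrightarrow> x \<in> Eof (Qrel R E) `` skel_preim Y R A"
    if "x \<in> Y" for x
  proof -
    have "skel_pi R x \<in> Eof (skel_Q Y R E) `` A \<longleftrightarrow>
        (\<exists>y\<in>Y. skel_pi R y \<in> A \<and> (skel_pi R y, skel_pi R x) \<in> skel_Q Y R E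
                             \<and> (skel_pi R x, skel_pi R y) \<in> skel_Q Y R E)"
      using assms(4) unfolding Eof_def skel_X_eq_image by auto
    also have "\<dots> \<longleftrightarrow> x \<in> Eof (Qrel R E) `` skel_preim Y R A"
      using that by (auto simp: skel_Q_iff[OF assms(1,3)] Eof_def skel_preim_def)
    finally show ?thesis .
  qed
  moreover have "Eof (Qrel R E) `` skel_preim Y R A \<subseteq> Y"
    using Q_Y unfolding Eof_def by blast
  ultimately show ?thesis
    unfolding skel_preim_def by blast
qed

theorem lemma3p11:
  fixes T :: "'a topology" and R E :: "('a \<times> 'a) set"
  assumes "descriptive_MS4_frame T R E"
  defines "Y \<equiv> topspace T"
  defines "X \<equiv> skel_X Y R"
  defines "Q \<equiv> Qrel R E"
  shows "skel_preim Y R (max_set X (skel_R Y R)) = qmax_set Y R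
    \<and> (\<forall>A. A \<subseteq> X \<longrightarrow>
           skel_preim Y R (Eof (skel_Q Y R E) `` A) = Eof Q `` (skel_preim Y R A))
    \<and> skel_preim Y R (Eof (skel_Q Y R E) `` (max_set X (skel_R Y R)))
           = Eof Q `` (qmax_set Y R)"
proof -
  have R_quasi_order: "quasi_order_on Y R"
    using assms(1) unfolding descriptive_MS4_frame_def Y_def by blast
  have E_subset: "E \<subseteq> Y \<times> Y"
    using assms(1) unfolding descriptive_MS4_frame_def equiv_def refl_on_def Y_def by blast
  have comm: "E O R \<subseteq> R O E"
    using assms(1) by (rule descriptive_MS4_frame_commute)
  have max: "skel_preim Y R (max_set X (skel_R Y R)) = qmax_set Y R"
    unfolding X_def using R_quasi_order by (rule skel_preim_max_set)
  have preim: "skel_preim Y R (Eof (skel_Q Y R E) `` A) = Eof Q `` (skel_preim Y R A)"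
    if "A \<subseteq> X" for A
    using skel_preim_Eof_skel_Q[OF R_quasi_order E_subset comm] that unfolding X_def Q_def by blast
  have "max_set X (skel_R Y R) \<subseteq> X"
    unfolding max_set_def by blast
  then show ?thesis
    using max preim by simp
qed

end
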